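(* For every connected twin-free graph $G$ with $n$ vertices, $i_{\max}(G)>\log_2(n)$.
   Context: $i_{\max}(G)$ denotes the number of maximal independent sets of $G$. A graph is twin-free if no two vertices have the same open neighbourhood. *)

theory Defs
  imports Complex_Main
begin

definition simple_graph :: "'a set \<Rightarrow> ('a \<Rightarrow> 'a \<Rightarrow> bool) \<Rightarrow> bool" where
  "simple_graph V E \<longleftrightarrow> finite V \<and> (\<forall>u v. E u v \<longrightarrow> E v u) \<and> (\<forall>v. \<not> E v v)
     \<and> (\<forall>u v. E u v \<longrightarrow> u \<in> V \<and> v \<in> V)"

definition open_nbhd :: "'a set \<Rightarrow> ('a \<Rightarrow> 'a \<Rightarrow> bool) \<Rightarrow> 'a \<Rightarrow> 'a set" where
  "open_nbhd V E v = {u \<in> V. E v u}"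

definition twin_free :: "'a set \<Rightarrow> ('a \<Rightarrow> 'a \<Rightarrow> bool) \<Rightarrow> bool" where
  "twin_free V E \<longleftrightarrow> (\<forall>u\<in>V. \<forall>v\<in>V. u \<noteq> v \<longrightarrow> open_nbhd V E u \<noteq> open_nbhd V E v)"

definition connected_graph :: "'a set \<Rightarrow> ('a \<Rightarrow> 'a \<Rightarrow> bool) \<Rightarrow> bool" where
  "connected_graph V E \<longleftrightarrow> V \<noteq> {} \<and>
     (\<forall>u\<in>V. \<forall>v\<in>V. (u, v) \<in> {(x, y). x \<in> V \<and> y \<in> V \<and> E x y}\<^sup>*)"

definition independent_set :: "'a set \<Rightarrow> ('a \<Rightarrow> 'a \<Rightarrow> bool) \<Rightarrow> 'a set \<Rightarrow> bool" where
  "independent_set V E S \<longleftrightarrow> S \<subseteq> V \<and> (\<forall>u\<in>S. \<forall>v\<in>S. \<not> E u v)"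

definition maximal_independent_set :: "'a set \<Rightarrow> ('a \<Rightarrow> 'a \<Rightarrow> bool) \<Rightarrow> 'a set \<Rightarrow> bool" where
  "maximal_independent_set V E S \<longleftrightarrow> independent_set V E S \<and>
     (\<forall>T. independent_set V E T \<and> S \<subseteq> T \<longrightarrow> T = S)"

definition i_max :: "'a set \<Rightarrow> ('a \<Rightarrow> 'a \<Rightarrow> bool) \<Rightarrow> nat" where
  "i_max V E = card {S. maximal_independent_set V E S}"

end

theory Submission
  imports Defs
begin

text \<open>Send each vertex v to the family of maximal independent sets containing v. Every vertex lies
  in some maximal independent set, so these families are nonempty; and they are pairwise distinct:
  adjacent vertices never share a maximal independent set, while for non-adjacent u, v
  twin-freeness yields a neighbour w of u not adjacent to v, and a maximal independent set
  extending {v, w} contains v but not u. Hence n \<le> 2^i_max - 1.\<close>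

lemma simple_graphD:
  assumes "simple_graph V E"
  shows "finite V" and "E u v \<Longrightarrow> E v u" and "\<not> E v v" and "E u v \<Longrightarrow> v \<in> V"
  using assms unfolding simple_graph_def by blast+

lemma ex_maximal_independent_superset:
  assumes "finite V" and "independent_set V E T"
  shows "\<exists>S. maximal_independent_set V E S \<and> T \<subseteq> S"
proof -
  let ?P = "\<lambda>S. independent_set V E S \<and> T \<subseteq> S"
  have "\<forall>S. ?P S \<longrightarrow> card S < card V + 1"
    using assms(1) by (auto simp: independent_set_def intro: card_mono le_imp_less_Suc)
  then obtain S where S: "?P S" and largest: "\<forall>S'. ?P S' \<longrightarrow> card S' \<le> card S"
    using ex_has_greatest_nat[of ?P T card "card V + 1"] assms(2) by blast
  have "maximal_independent_set V E S"
    unfolding maximal_independent_set_def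
  proof (intro conjI allI impI)
    show "independent_set V E S" using S by blast
    fix S' assume S': "independent_set V E S' \<and> S \<subseteq> S'"
    then have "finite S'"
      using assms(1) by (auto simp: independent_set_def intro: finite_subset)
    moreover have "card S' \<le> card S" using largest S' S by blast
    ultimately show "S' = S" using S' card_seteq[of S' S] by blast
  qed
  then show ?thesis using S by blast
qed

lemma finite_maximal_independent_sets:
  "finite V \<Longrightarrow> finite {S. maximal_independent_set V E S}"
  by (rule finite_subset[of _ "Pow V"])
     (auto simp: maximal_independent_set_def independent_set_def)

lemma i_max_pos:
  assumes "finite V"
  shows "i_max V E > 0"
proof -
  have "independent_set V E {}" by (simp add: independent_set_def)
  then obtain S where "maximal_independent_set V E S"
    using ex_maximal_independent_superset[OF assms] by blast
  then show ?thesis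
    using finite_maximal_independent_sets[OF assms] by (auto simp: i_max_def card_gt_0_iff)
qed

lemma ex_maximal_independent_containing:
  assumes "simple_graph V E" and "v \<in> V"
  shows "\<exists>S. maximal_independent_set V E S \<and> v \<in> S"
proof -
  have "independent_set V E {v}"
    using assms simple_graphD(3) by (simp add: independent_set_def)
  then show ?thesis
    using ex_maximal_independent_superset[OF simple_graphD(1)[OF assms(1)]] by blast
qed

lemma maximal_independent_not_adjacent:
  "maximal_independent_set V E S \<Longrightarrow> u \<in> S \<Longrightarrow> v \<in> S \<Longrightarrow> \<not> E u v"
  by (simp add: maximal_independent_set_def independent_set_def)

lemma ex_maximal_independent_separating:
  assumes "simple_graph V E" and "v \<in> V" and "E u w" and "\<not> E v w"
  shows "\<exists>S. maximal_independent_set V E S \<and> v \<in> S \<and> u \<notin> S"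
proof -
  have "w \<in> V" and "\<not> E w v"
    using assms(3,4) simple_graphD(2,4)[OF assms(1)] by blast+
  then have "independent_set V E {v, w}"
    using assms(2,4) simple_graphD(3)[OF assms(1)] by (simp add: independent_set_def)
  then obtain S where S: "maximal_independent_set V E S" "{v, w} \<subseteq> S"
    using ex_maximal_independent_superset[OF simple_graphD(1)[OF assms(1)]] by blast
  then have "u \<notin> S"
    using maximal_independent_not_adjacent[OF S(1), of u w] assms(3) by blast
  then show ?thesis using S by blast
qed

lemma inj_on_maximal_independent_sets_containing:
  assumes graph: "simple_graph V E" and "twin_free V E"
  shows "inj_on (\<lambda>v. {S. maximal_independent_set V E S \<and> v \<in> S}) V"
proof (rule inj_onI, rule ccontr)
  fix u v
  assume u: "u \<in> V" and v: "v \<in> V" and u_ne_v: "u \<noteq> v"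
    and same: "{S. maximal_independent_set V E S \<and> u \<in> S} = {S. maximal_independent_set V E S \<and> v \<in> S}"
  have contains_both: "v \<in> S \<longleftrightarrow> u \<in> S" if "maximal_independent_set V E S" for S
    using same that by blast
  show False
  proof (cases "E u v")
    case True
    obtain S where "maximal_independent_set V E S" "u \<in> S"
      using ex_maximal_independent_containing[OF graph u] by blast
    then show False
      using contains_both maximal_independent_not_adjacent[of V E S u v] True by blast
  next
    case False
    have "open_nbhd V E u \<noteq> open_nbhd V E v"
      using assms(2) u v u_ne_v by (simp add: twin_free_def)
    then obtain w where "(E u w \<and> \<not> E v w) \<or> (E v w \<and> \<not> E u w)"
      unfolding open_nbhd_def by blast
    then show False
    proof
      assume "E u w \<and> \<not> E v w"
      then obtain S where "maximal_independent_set V E S" "v \<in> S" "u \<notin> S"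
        using ex_maximal_independent_separating[OF graph v] by blast
      then show False using contains_both by blast
    next
      assume "E v w \<and> \<not> E u w"
      then obtain S where "maximal_independent_set V E S" "u \<in> S" "v \<notin> S"
        using ex_maximal_independent_separating[OF graph u] by blast
      then show False using contains_both by blast
    qed
  qed
qed

lemma card_less_two_power_i_max:
  assumes "simple_graph V E" and "twin_free V E"
  shows "card V < 2 ^ i_max V E"
proof -
  let ?M = "{S. maximal_independent_set V E S}"
  have finite_M: "finite ?M"
    using finite_maximal_independent_sets simple_graphD(1)[OF assms(1)] by blast
  have "(\<lambda>v. {S. maximal_independent_set V E S \<and> v \<in> S}) ` V \<subseteq> Pow ?M - {{}}"
    using ex_maximal_independent_containing[OF assms(1)] by auto
  then have "card V \<le> card (Pow ?M - {{}})"
    using inj_on_maximal_independent_sets_containing[OF assms] finite_M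
    by (intro card_inj_on_le) auto
  also have "\<dots> = 2 ^ i_max V E - 1"
    using finite_M by (simp add: card_Diff_singleton card_Pow i_max_def)
  also have "\<dots> < 2 ^ i_max V E"
    by simp
  finally show ?thesis .
qed

theorem proposition2p3:
  fixes V :: "'a set" and E :: "'a \<Rightarrow> 'a \<Rightarrow> bool"
  assumes "simple_graph V E" and "connected_graph V E" and "twin_free V E"
  shows "real (i_max V E) > log 2 (real (card V))"
proof (cases "card V = 0")
  case True
  then show ?thesis
    using i_max_pos[OF simple_graphD(1)[OF assms(1)]] by (simp add: log_def)
next
  case False
  then show ?thesis
    using card_less_two_power_i_max[OF assms(1,3)]
    by (intro log_of_power_less) simp_all
qed

end
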